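(* Let $p\ge 3$ be an odd integer, $\mu>0$ and $\alpha>0$. Let $(x_0,y_0)\in\mathbb{R}^2$ and let $(x,y)\in C^1([0,\infty);\mathbb{R}^2)$ be the global solution of \[ x'(t)=y(t),\qquad y'(t)=-\alpha x(t)^p-\mu y(t),\quad t>0,\qquad x(0)=x_0,\ y(0)=y_0. \] Define \[ \mathcal{E}(t):=\frac12 y(t)^2+\frac{\mu}{2}x(t)y(t)+\frac{\mu^2}{4}x(t)^2+\frac{\alpha}{p+1}x(t)^{p+1}. \] Then there exists a constant $C_\dagger>0$ such that \[ \mathcal{E}(t)\le C_\dagger\, t^{-\frac{2}{p-1}}\quad\text{for all } t>0. \] *)

theory Defs
  imports "HOL-Analysis.Analysis"
begin

definition energy :: "nat \<Rightarrow> real \<Rightarrow> real \<Rightarrow> real \<Rightarrow> real \<Rightarrow> real" where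
  "energy p \<alpha> \<mu> x y = y^2 / 2 + \<mu> / 2 * x * y + \<mu>^2 / 4 * x^2 + \<alpha> / (real p + 1) * x ^ (p + 1)"

end

theory Submission
  imports Defs
begin

text \<open>
  Write p = 2k + 1. Along a solution the energy dissipates at the rate
  E' = -(\<mu>/2) (y^2 + \<alpha> x^(p+1)) \<le> 0, so the orbit stays in a bounded set max(x^2, y^2) \<le> B.
  There E is comparable to max(x^2, y^2), and the (k+1)-th power of a bounded quantity is
  dominated by the quantity itself; hence E^(k+1) \<le> K (y^2 + \<alpha> x^(p+1)), that is,
  E' \<le> -c E^(k+1). Equivalently (E^(-k))' \<ge> k c, which integrates to
  E(t) \<le> (k c t)^(-1/k) = O(t^(-2/(p-1))).
\<close>

lemma DERIV_at_of_within_atLeast: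
  fixes f :: "real \<Rightarrow> real"
  assumes "(f has_real_derivative D) (at t within {a..})" and "a < t"
  shows "(f has_real_derivative D) (at t)"
proof -
  have "t \<in> interior {a..}" using \<open>a < t\<close> by simp
  then show ?thesis using assms(1) at_within_interior by metis
qed

lemma continuous_on_atLeast_of_DERIV_within:
  fixes f :: "real \<Rightarrow> real"
  assumes "\<And>t. t \<ge> a \<Longrightarrow> (f has_real_derivative f' t) (at t within {a..})"
  shows "continuous_on {a..} f"
  using assms DERIV_continuous continuous_on_eq_continuous_within by fastforce

lemma DERIV_within_nonpos_imp_decreasing:
  fixes f f' :: "real \<Rightarrow> real"
  assumes deriv: "\<And>t. t \<ge> a \<Longrightarrow> (f has_real_derivative f' t) (at t within {a..})"
    and nonpos: "\<And>t. t \<ge> a \<Longrightarrow> f' t \<le> 0"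
    and "a \<le> s" "s \<le> t"
  shows "f t \<le> f s"
proof (rule DERIV_nonpos_imp_decreasing_open[OF \<open>s \<le> t\<close>])
  fix r assume "s < r" "r < t"
  then have "a < r" using \<open>a \<le> s\<close> by simp
  then have "(f has_real_derivative f' r) (at r)" "f' r \<le> 0"
    using deriv[of r] nonpos[of r] DERIV_at_of_within_atLeast by auto
  then show "\<exists>D. (f has_real_derivative D) (at r) \<and> D \<le> 0" by blast
next
  have "continuous_on {a..} f"
    using deriv by (rule continuous_on_atLeast_of_DERIV_within)
  then show "continuous_on {s..t} f"
    by (rule continuous_on_subset) (use \<open>a \<le> s\<close> in auto)
qed

lemma inverse_power_ge_of_DERIV_le_neg_power:
  fixes f f' :: "real \<Rightarrow> real" and c t :: real and k :: nat
  assumes "k \<ge> 1"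
    and deriv: "\<And>s. s \<ge> 0 \<Longrightarrow> (f has_real_derivative f' s) (at s within {0..})"
    and dissip: "\<And>s. s \<ge> 0 \<Longrightarrow> f' s \<le> - c * f s ^ (k + 1)"
    and pos: "\<And>s. 0 \<le> s \<Longrightarrow> s \<le> t \<Longrightarrow> f s > 0"
    and "t \<ge> 0"
  shows "real k * c * t \<le> inverse (f t ^ k)"
proof -
  define H where "H s = inverse (f s ^ k) - real k * c * s" for s
  have "H 0 \<le> H t"
  proof (rule DERIV_nonneg_imp_increasing_open[OF \<open>t \<ge> 0\<close>])
    fix s assume s: "0 < s" "s < t"
    have fs: "f s > 0" using pos s by simp
    have "(H has_real_derivative
        - (inverse (f s ^ k) * (real k * f s ^ (k - 1) * f' s) * inverse (f s ^ k)) - real k * c) (at s)"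
      unfolding H_def using fs DERIV_at_of_within_atLeast[OF deriv s(1)] s(1)
      by (intro derivative_eq_intros refl) auto
    moreover have "inverse (f s ^ k) * (real k * f s ^ (k - 1) * f' s) * inverse (f s ^ k)
        = real k * f' s / f s ^ (k + 1)"
    proof -
      have "(k - 1) + (k + 1) = k + k" using \<open>k \<ge> 1\<close> by simp
      then have "f s ^ (k - 1) * f s ^ (k + 1) = f s ^ k * f s ^ k"
        by (metis power_add)
      then show ?thesis using fs by (simp add: field_simps)
    qed
    moreover have "real k * c \<le> - (real k * f' s / f s ^ (k + 1))"
    proof -
      have "real k * (c * f s ^ (k + 1)) \<le> real k * (- f' s)"
        using dissip[of s] s(1) by (intro mult_left_mono) auto
      then show ?thesis using fs by (simp add: field_simps)
    qed
    ultimately show "\<exists>D. (H has_real_derivative D) (at s) \<and> 0 \<le> D"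
      by (metis diff_ge_0_iff_ge)
  next
    have "continuous_on {0..} f"
      using deriv by (rule continuous_on_atLeast_of_DERIV_within)
    then have "continuous_on {0..t} f"
      by (rule continuous_on_subset) auto
    moreover have "\<forall>s\<in>{0..t}. f s ^ k \<noteq> 0"
      using pos by fastforce
    ultimately show "continuous_on {0..t} H"
      unfolding H_def by (intro continuous_intros) auto
  qed
  moreover have "0 < inverse (f 0 ^ k)" using pos[of 0] \<open>t \<ge> 0\<close> by simp
  ultimately show ?thesis unfolding H_def by linarith
qed

lemma decay_of_DERIV_le_neg_power:
  fixes f f' :: "real \<Rightarrow> real" and c t :: real and k :: nat
  assumes "k \<ge> 1" "c > 0"
    and deriv: "\<And>s. s \<ge> 0 \<Longrightarrow> (f has_real_derivative f' s) (at s within {0..})"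
    and dissip: "\<And>s. s \<ge> 0 \<Longrightarrow> f' s \<le> - c * f s ^ (k + 1)"
    and nonneg: "\<And>s. s \<ge> 0 \<Longrightarrow> f s \<ge> 0"
    and "t > 0"
  shows "f t \<le> (real k * c) powr (- 1 / real k) * t powr (- 1 / real k)"
proof (cases "f t > 0")
  case False
  moreover have "0 < (real k * c) powr (- 1 / real k) * t powr (- 1 / real k)"
    using \<open>k \<ge> 1\<close> \<open>c > 0\<close> \<open>t > 0\<close> by simp
  ultimately show ?thesis by linarith
next
  case True
  have "f' s \<le> 0" if "s \<ge> 0" for s
  proof -
    have "0 \<le> c * f s ^ (k + 1)" using nonneg[OF that] \<open>c > 0\<close> by simp
    then show ?thesis using dissip[OF that] by linarith
  qed
  then have "f s \<ge> f t" if "0 \<le> s" "s \<le> t" for s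
    using DERIV_within_nonpos_imp_decreasing[OF deriv] that by blast
  then have "real k * c * t \<le> inverse (f t ^ k)"
    using True \<open>t > 0\<close> by (intro inverse_power_ge_of_DERIV_le_neg_power[OF \<open>k \<ge> 1\<close> deriv dissip]) force+
  moreover have "0 < real k * c * t" using \<open>k \<ge> 1\<close> \<open>c > 0\<close> \<open>t > 0\<close> by simp
  ultimately have "f t ^ k \<le> inverse (real k * c * t)"
    using le_imp_inverse_le by fastforce
  then have "(f t ^ k) powr (1 / real k) \<le> inverse (real k * c * t) powr (1 / real k)"
    using True by (intro powr_mono2) auto
  moreover have "(f t ^ k) powr (1 / real k) = f t"
    using True \<open>k \<ge> 1\<close> by (simp add: powr_realpow[symmetric] powr_powr)
  moreover have "inverse (real k * c * t) powr (1 / real k)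
      = (real k * c) powr (- 1 / real k) * t powr (- 1 / real k)"
    by (metis inverse_powr minus_divide_left powr_minus powr_mult)
  ultimately show ?thesis by simp
qed

lemma max_power_le_add:
  fixes a b :: "'a::linordered_semidom"
  assumes "0 \<le> a" "0 \<le> b"
  shows "max a b ^ n \<le> a ^ n + b ^ n"
  using assms by (cases "a \<le> b") (auto simp: max_def add_increasing add_increasing2)

lemma power_Suc_le_power_mult:
  fixes a B :: "'a::linordered_semidom"
  assumes "0 \<le> a" "a \<le> B"
  shows "a ^ Suc k \<le> B ^ k * a"
proof -
  have "a ^ k \<le> B ^ k" using assms by (intro power_mono) auto
  then show ?thesis using \<open>0 \<le> a\<close> by (simp add: mult.commute mult_left_mono)
qed

lemma power_Suc_odd_eq_power_sq:
  fixes x :: "'a::monoid_mult"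
  assumes "p = 2 * k + 1"
  shows "x ^ (p + 1) = (x\<^sup>2) ^ (k + 1)"
proof -
  have "p + 1 = 2 * (k + 1)" using assms by simp
  then show ?thesis by (simp only: power_mult)
qed

lemma energy_completed_square:
  "energy p \<alpha> \<mu> x y = (y + \<mu> * x / 2)\<^sup>2 / 2 + \<mu>\<^sup>2 * x\<^sup>2 / 8 + \<alpha> / (real p + 1) * x ^ (p + 1)"
  unfolding energy_def by (simp add: power2_eq_square field_simps)

lemma potential_energy_nonneg:
  assumes "odd p" "\<alpha> > 0"
  shows "0 \<le> \<alpha> / (real p + 1) * x ^ (p + 1)"
proof -
  have "0 \<le> x ^ (p + 1)" using \<open>odd p\<close> by (intro zero_le_even_power) simp
  then show ?thesis using \<open>\<alpha> > 0\<close> by (intro mult_nonneg_nonneg) auto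
qed

lemma energy_nonneg:
  assumes "odd p" "\<alpha> > 0"
  shows "0 \<le> energy p \<alpha> \<mu> x y"
  using potential_energy_nonneg[OF assms, of x] zero_le_power2[of "y + \<mu> * x / 2"] zero_le_power2[of "\<mu> * x"]
  unfolding energy_completed_square power_mult_distrib by linarith

lemma max_sq_le_energy:
  assumes "odd p" "\<alpha> > 0" "\<mu> > 0"
  shows "max (x\<^sup>2) (y\<^sup>2) \<le> 8 * (1 + 1 / \<mu>\<^sup>2) * energy p \<alpha> \<mu> x y"
proof -
  define E where "E = energy p \<alpha> \<mu> x y"
  have "\<mu>\<^sup>2 * x\<^sup>2 / 8 \<le> E" and "(y + \<mu> * x / 2)\<^sup>2 / 2 \<le> E"
    using potential_energy_nonneg[OF assms(1,2), of x] zero_le_power2[of "y + \<mu> * x / 2"]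
      zero_le_power2[of "\<mu> * x"]
    unfolding E_def energy_completed_square power_mult_distrib by linarith+
  moreover have "y\<^sup>2 \<le> 2 * (y + \<mu> * x / 2)\<^sup>2 + 2 * (\<mu> * x / 2)\<^sup>2"
    using zero_le_power2[of "y + \<mu> * x"] by (simp add: power2_eq_square algebra_simps)
  ultimately have "x\<^sup>2 \<le> 8 / \<mu>\<^sup>2 * E" and "y\<^sup>2 \<le> 8 * E"
    using \<open>\<mu> > 0\<close> by (simp_all add: field_simps power_mult_distrib)
  moreover have "0 \<le> 8 / \<mu>\<^sup>2 * E"
    unfolding E_def using energy_nonneg[OF assms(1,2)] by simp
  moreover have "8 * (1 + 1 / \<mu>\<^sup>2) * E = 8 * E + 8 / \<mu>\<^sup>2 * E"
    by (simp add: algebra_simps)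
  ultimately show ?thesis
    unfolding E_def[symmetric] max.bounded_iff using zero_le_power2[of y] by linarith
qed

lemma energy_le_sq_add_power:
  assumes "odd p" "\<alpha> > 0"
  shows "energy p \<alpha> \<mu> x y \<le> y\<^sup>2 + \<mu>\<^sup>2 * x\<^sup>2 + \<alpha> * x ^ (p + 1)"
proof -
  have "0 \<le> x ^ (p + 1)" using \<open>odd p\<close> by (intro zero_le_even_power) simp
  then have "\<alpha> / (real p + 1) * x ^ (p + 1) \<le> \<alpha> * x ^ (p + 1)"
    using \<open>\<alpha> > 0\<close> by (intro mult_right_mono) (auto simp: field_simps)
  moreover have "\<mu> / 2 * x * y \<le> y\<^sup>2 / 2 + \<mu>\<^sup>2 * x\<^sup>2 / 8"
    using zero_le_power2[of "y - \<mu> * x / 2"] by (simp add: power2_eq_square algebra_simps)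
  moreover have "0 \<le> \<mu>\<^sup>2 * x\<^sup>2" by simp
  ultimately show ?thesis unfolding energy_def by linarith
qed

lemma energy_has_derivative:
  fixes x y :: "real \<Rightarrow> real"
  assumes dx: "(x has_real_derivative y t) (at t within S)"
    and dy: "(y has_real_derivative (- \<alpha> * x t ^ p - \<mu> * y t)) (at t within S)"
  shows "((\<lambda>s. energy p \<alpha> \<mu> (x s) (y s)) has_real_derivative
      - \<mu> / 2 * ((y t)\<^sup>2 + \<alpha> * x t ^ (p + 1))) (at t within S)"
proof -
  define y' where "y' = - \<alpha> * x t ^ p - \<mu> * y t"
  (* E' is written in the literal shape produced by DERIV_power and DERIV_mult', so that these
     rules apply by unification. *)
  define E' where "E' = 1 / 2 * (real 2 * (y' * y t ^ (2 - Suc 0))) + \<mu> / 2 * (x t * y' + y t * y t)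
    + \<mu>\<^sup>2 / 4 * (real 2 * (y t * x t ^ (2 - Suc 0)))
    + \<alpha> / (real p + 1) * (real (p + 1) * (y t * x t ^ (p + 1 - Suc 0)))"
  have "((\<lambda>s. 1 / 2 * (y s)\<^sup>2 + \<mu> / 2 * (x s * y s) + \<mu>\<^sup>2 / 4 * (x s)\<^sup>2
        + \<alpha> / (real p + 1) * x s ^ (p + 1)) has_real_derivative E') (at t within S)"
    using dx dy unfolding E'_def y'_def by (intro DERIV_add DERIV_cmult DERIV_mult' DERIV_power)
  moreover have "(\<lambda>s. 1 / 2 * (y s)\<^sup>2 + \<mu> / 2 * (x s * y s) + \<mu>\<^sup>2 / 4 * (x s)\<^sup>2
        + \<alpha> / (real p + 1) * x s ^ (p + 1)) = (\<lambda>s. energy p \<alpha> \<mu> (x s) (y s))"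
    unfolding energy_def by (simp add: algebra_simps)
  moreover have "E' = - \<mu> / 2 * ((y t)\<^sup>2 + \<alpha> * x t ^ (p + 1))"
  proof -
    have "\<alpha> / (real p + 1) * (real (p + 1) * (y t * x t ^ p)) = \<alpha> * y t * x t ^ p"
      by (simp add: field_simps)
    then show ?thesis unfolding E'_def y'_def by (simp add: power2_eq_square algebra_simps)
  qed
  ultimately show ?thesis by simp
qed

lemma solution_sq_le_initial_energy:
  fixes x y :: "real \<Rightarrow> real"
  assumes "odd p" "\<alpha> > 0" "\<mu> > 0"
    and dx: "\<And>t. t \<ge> 0 \<Longrightarrow> (x has_real_derivative y t) (at t within {0..})"
    and dy: "\<And>t. t \<ge> 0 \<Longrightarrow> (y has_real_derivative (- \<alpha> * x t ^ p - \<mu> * y t)) (at t within {0..})"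
    and "t \<ge> 0"
  shows "max ((x t)\<^sup>2) ((y t)\<^sup>2) \<le> 8 * (1 + 1 / \<mu>\<^sup>2) * energy p \<alpha> \<mu> (x 0) (y 0)"
proof -
  have "- \<mu> / 2 * ((y s)\<^sup>2 + \<alpha> * x s ^ (p + 1)) \<le> 0" for s
  proof -
    have "0 \<le> x s ^ (p + 1)" using \<open>odd p\<close> by (intro zero_le_even_power) simp
    then show ?thesis using \<open>\<alpha> > 0\<close> \<open>\<mu> > 0\<close> by simp
  qed
  then have "energy p \<alpha> \<mu> (x t) (y t) \<le> energy p \<alpha> \<mu> (x 0) (y 0)"
    using DERIV_within_nonpos_imp_decreasing[OF energy_has_derivative[OF dx dy]] \<open>t \<ge> 0\<close> by blast
  then have "8 * (1 + 1 / \<mu>\<^sup>2) * energy p \<alpha> \<mu> (x t) (y t)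
      \<le> 8 * (1 + 1 / \<mu>\<^sup>2) * energy p \<alpha> \<mu> (x 0) (y 0)"
    by (intro mult_left_mono) auto
  then show ?thesis using max_sq_le_energy[OF assms(1-3)] order_trans by blast
qed

lemma energy_le_max_sq:
  assumes "\<alpha> > 0" "p = 2 * k + 1" "x\<^sup>2 \<le> B"
  shows "energy p \<alpha> \<mu> x y \<le> (1 + \<mu>\<^sup>2 + \<alpha> * B ^ k) * max (x\<^sup>2) (y\<^sup>2)"
proof -
  have "x ^ (p + 1) = (x\<^sup>2) ^ Suc k"
    using power_Suc_odd_eq_power_sq[OF \<open>p = 2 * k + 1\<close>] by simp
  also have "\<dots> \<le> B ^ k * x\<^sup>2"
    using \<open>x\<^sup>2 \<le> B\<close> by (intro power_Suc_le_power_mult) auto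
  also have "\<dots> \<le> B ^ k * max (x\<^sup>2) (y\<^sup>2)"
    using \<open>x\<^sup>2 \<le> B\<close> order_trans[OF zero_le_power2 \<open>x\<^sup>2 \<le> B\<close>] by (intro mult_left_mono) auto
  finally have "\<alpha> * x ^ (p + 1) \<le> \<alpha> * B ^ k * max (x\<^sup>2) (y\<^sup>2)"
    using \<open>\<alpha> > 0\<close> by (simp add: mult.assoc)
  moreover have "\<mu>\<^sup>2 * x\<^sup>2 \<le> \<mu>\<^sup>2 * max (x\<^sup>2) (y\<^sup>2)" by (intro mult_left_mono) auto
  moreover have "odd p" using \<open>p = 2 * k + 1\<close> by simp
  ultimately show ?thesis
    using energy_le_sq_add_power[OF \<open>odd p\<close> \<open>\<alpha> > 0\<close>, of \<mu> x y] max.cobounded2[of "y\<^sup>2" "x\<^sup>2"]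
    by (simp add: algebra_simps)
qed

lemma energy_power_le_dissipation:
  assumes "\<alpha> > 0" "p = 2 * k + 1" "0 \<le> B"
  shows "\<exists>K > 0. \<forall>x y. max (x\<^sup>2) (y\<^sup>2) \<le> B \<longrightarrow>
    energy p \<alpha> \<mu> x y ^ (k + 1) \<le> K * (y\<^sup>2 + \<alpha> * x ^ (p + 1))"
proof -
  define M where "M = 1 + \<mu>\<^sup>2 + \<alpha> * B ^ k"
  define K where "K = M ^ (k + 1) * max (B ^ k) (1 / \<alpha>)"
  have "M > 0" unfolding M_def using \<open>\<alpha> > 0\<close> \<open>0 \<le> B\<close>
    by (simp add: add_pos_nonneg)
  then have "K > 0" unfolding K_def using \<open>\<alpha> > 0\<close> by (simp add: less_max_iff_disj)
  have "energy p \<alpha> \<mu> x y ^ (k + 1) \<le> K * (y\<^sup>2 + \<alpha> * x ^ (p + 1))"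
    if bounded: "max (x\<^sup>2) (y\<^sup>2) \<le> B" for x y
  proof -
    have "odd p" using \<open>p = 2 * k + 1\<close> by simp
    have "energy p \<alpha> \<mu> x y ^ (k + 1) \<le> (M * max (x\<^sup>2) (y\<^sup>2)) ^ (k + 1)"
      using energy_le_max_sq[OF assms(1,2)] energy_nonneg[OF \<open>odd p\<close> \<open>\<alpha> > 0\<close>] bounded
      unfolding M_def by (intro power_mono) auto
    also have "\<dots> \<le> M ^ (k + 1) * ((x\<^sup>2) ^ (k + 1) + (y\<^sup>2) ^ (k + 1))"
      unfolding power_mult_distrib using \<open>M > 0\<close> by (intro mult_left_mono max_power_le_add) auto
    also have "\<dots> \<le> M ^ (k + 1) * (x ^ (p + 1) + B ^ k * y\<^sup>2)"
      using bounded \<open>M > 0\<close> power_Suc_odd_eq_power_sq[OF \<open>p = 2 * k + 1\<close>, of x]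
      by (intro mult_left_mono add_left_mono) (auto simp del: power_Suc intro!: power_Suc_le_power_mult)
    also have "\<dots> \<le> K * (y\<^sup>2 + \<alpha> * x ^ (p + 1))"
    proof -
      have "0 \<le> x ^ (p + 1)" using \<open>odd p\<close> by (intro zero_le_even_power) simp
      then have "x ^ (p + 1) \<le> max (B ^ k) (1 / \<alpha>) * (\<alpha> * x ^ (p + 1))"
        using \<open>\<alpha> > 0\<close> mult_right_mono[OF max.cobounded2[of "1 / \<alpha>" "B ^ k"], of "\<alpha> * x ^ (p + 1)"]
        by simp
      moreover have "B ^ k * y\<^sup>2 \<le> max (B ^ k) (1 / \<alpha>) * y\<^sup>2"
        by (intro mult_right_mono) auto
      ultimately have "x ^ (p + 1) + B ^ k * y\<^sup>2 \<le> max (B ^ k) (1 / \<alpha>) * (y\<^sup>2 + \<alpha> * x ^ (p + 1))"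
        by (simp add: distrib_left)
      then show ?thesis
        unfolding K_def mult.assoc using \<open>M > 0\<close> by (intro mult_left_mono) auto
    qed
    finally show ?thesis .
  qed
  with \<open>K > 0\<close> show ?thesis by blast
qed

theorem proposition2:
  fixes p :: nat and \<alpha> \<mu> x0 y0 :: real and x y :: "real \<Rightarrow> real"
  assumes "odd p" and "p \<ge> 3" and "\<mu> > 0" and "\<alpha> > 0"
    and "\<And>t. t \<ge> 0 \<Longrightarrow> (x has_real_derivative y t) (at t within {0..})"
    and "\<And>t. t \<ge> 0 \<Longrightarrow> (y has_real_derivative (- \<alpha> * x t ^ p - \<mu> * y t)) (at t within {0..})"
    and "x 0 = x0" and "y 0 = y0"
  shows "\<exists>C > 0. \<forall>t > 0. energy p \<alpha> \<mu> (x t) (y t) \<le> C * t powr (- 2 / (real p - 1))"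
proof -
  obtain k where p: "p = 2 * k + 1" using \<open>odd p\<close> oddE by blast
  have "k \<ge> 1" using \<open>p \<ge> 3\<close> p by simp
  define E where "E t = energy p \<alpha> \<mu> (x t) (y t)" for t
  define D where "D t = (y t)\<^sup>2 + \<alpha> * x t ^ (p + 1)" for t
  have E_deriv: "(E has_real_derivative - \<mu> / 2 * D t) (at t within {0..})" if "t \<ge> 0" for t
    unfolding E_def D_def using energy_has_derivative[OF assms(5,6)[OF that]] .
  define B where "B = 8 * (1 + 1 / \<mu>\<^sup>2) * E 0"
  have bounded: "max ((x t)\<^sup>2) ((y t)\<^sup>2) \<le> B" if "t \<ge> 0" for t
    unfolding B_def E_def using solution_sq_le_initial_energy[OF assms(1,4,3,5,6) that] .
  have "0 \<le> B" using bounded[of 0] zero_le_power2[of "x 0"] by linarith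
  then obtain K where "K > 0" and K: "\<And>x y. max (x\<^sup>2) (y\<^sup>2) \<le> B \<Longrightarrow>
      energy p \<alpha> \<mu> x y ^ (k + 1) \<le> K * (y\<^sup>2 + \<alpha> * x ^ (p + 1))"
    using energy_power_le_dissipation[OF \<open>\<alpha> > 0\<close> p] by blast
  define c where "c = \<mu> / (2 * K)"
  have "c > 0" unfolding c_def using \<open>\<mu> > 0\<close> \<open>K > 0\<close> by simp
  have "- \<mu> / 2 * D t \<le> - c * E t ^ (k + 1)" if "t \<ge> 0" for t
  proof -
    have "c * E t ^ (k + 1) \<le> c * (K * D t)"
      using K[OF bounded[OF that]] \<open>c > 0\<close> unfolding E_def D_def by (intro mult_left_mono) auto
    also have "\<dots> = \<mu> / 2 * D t" unfolding c_def using \<open>K > 0\<close> by simp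
    finally show ?thesis by simp
  qed
  then have "E t \<le> (real k * c) powr (- 1 / real k) * t powr (- 1 / real k)" if "t > 0" for t
    using decay_of_DERIV_le_neg_power[OF \<open>k \<ge> 1\<close> \<open>c > 0\<close> E_deriv]
      energy_nonneg[OF \<open>odd p\<close> \<open>\<alpha> > 0\<close>] that unfolding E_def by blast
  moreover have "- 2 / (real p - 1) = - 1 / real k" using p \<open>k \<ge> 1\<close> by (simp add: field_simps)
  ultimately show ?thesis
    unfolding E_def by (intro exI[of _ "(real k * c) powr (- 1 / real k)"]) (use \<open>k \<ge> 1\<close> \<open>c > 0\<close> in auto)
qed

end
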